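(* Let $\Phi:(X,d^X,\mu,T)\to(Y,d^Y,\nu,S)$ be a Borel factor map of compact model p.-p. systems, and let $\alpha>1$, $\delta>0$ and $\kappa>\kappa'>0$. Then for every $\alpha_1\in[1,\alpha)$ there exist $\kappa_1\in(\kappa',\kappa)$ and $\delta_1\in(0,\delta)$ such that \[\mathrm{BICOV}_{\alpha_1,\kappa_1,\kappa',\delta_1N}\big(X,d^{\mathbf{X}}_{[-N;0)},d^{\mathbf{X}}_{[0;N)},\mu\big)\ \ge\ \mathrm{BICOV}_{\alpha,\kappa,\kappa',\delta N}\big(Y,d^{\mathbf{Y}}_{[-N;0)},d^{\mathbf{Y}}_{[0;N)},\nu\big)\] for all sufficiently large $N$.
   Context: A compact model p.-p. system $(X,d^X,\mu,T)$: $(X,d^X)$ compact metric space, $T$ a homeomorphism, $\mu$ a $T$-invariant Borel probability. For finite $F\subseteq\mathbb{Z}$, $d^{\mathbf{X}}_F(x,x')=\sum_{n\in F}d^X(T^nx,T^nx')$. A Borel factor map is a Borel map $\Phi$ with $\Phi\circ T=S\circ\Phi$ $\mu$-a.e. and $\Phi_*\mu=\nu$ (not necessarily continuous). $B^d_r(x)=\{y:d(x,y)<r\}$, $B^d_r(F)=\bigcup_{x\in F}B^d_r(x)$. For a standard Borel space with totally bounded Borel pseudometrics $d_1,d_2$ and finite measure $\mu$: $\mathrm{bicov}_a((X,d_1,d_2,\mu),\delta)=\min\{|F|:F\subseteq X,\ \mu(B^{d_2}_\delta(B^{d_1}_\delta(F)))>a\}$; for $U\subseteq X$, $(U,d_1,d_2,\mu')$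 means $U$ with restricted pseudometrics (balls taken inside $U$) and unnormalized restriction of $\mu'$. $\mathrm{BICOV}_{\alpha,\kappa,\kappa',\delta}(X,d_1,d_2,\mu)=\min_{\mu'}\max_{U:\mu'(U)\ge\kappa}\mathrm{bicov}_{\kappa'}((U,d_1,d_2,\mu'),\delta)$, minimum over Borel probabilities $\mu'$ with $\|d\mu'/d\mu\|_\infty\le\alpha$, maximum over Borel $U\subseteq X$. *)

theory Defs
  imports "HOL-Probability.Probability"
begin

definition cmpp_system :: "'a::metric_space measure \<Rightarrow> ('a \<Rightarrow> 'a) \<Rightarrow> ('a \<Rightarrow> 'a) \<Rightarrow> bool" where
  "cmpp_system mu T Tinv \<longleftrightarrow>
     compact (UNIV :: 'a set) \<and>
     homeomorphism UNIV UNIV T Tinv \<and>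
     sets mu = sets borel \<and> prob_space mu \<and> distr mu mu T = mu"

definition iter_int :: "('a \<Rightarrow> 'a) \<Rightarrow> ('a \<Rightarrow> 'a) \<Rightarrow> int \<Rightarrow> 'a \<Rightarrow> 'a" where
  "iter_int T Tinv n = (if n \<ge> 0 then T ^^ nat n else Tinv ^^ nat (- n))"

definition dyn_dist :: "('a::metric_space \<Rightarrow> 'a) \<Rightarrow> ('a \<Rightarrow> 'a) \<Rightarrow> int set \<Rightarrow> 'a \<Rightarrow> 'a \<Rightarrow> real" where
  "dyn_dist T Tinv F x x' = (\<Sum>n\<in>F. dist (iter_int T Tinv n x) (iter_int T Tinv n x'))"

definition borel_factor_map ::
  "'a::metric_space measure \<Rightarrow> ('a \<Rightarrow> 'a) \<Rightarrow> 'b::metric_space measure \<Rightarrow> ('b \<Rightarrow> 'b) \<Rightarrow> ('a \<Rightarrow> 'b) \<Rightarrow> bool" where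
  "borel_factor_map mu T nu S Phi \<longleftrightarrow>
     Phi \<in> measurable mu nu \<and> (AE x in mu. Phi (T x) = S (Phi x)) \<and> distr mu nu Phi = nu"

definition nbhd_in :: "'a set \<Rightarrow> ('a \<Rightarrow> 'a \<Rightarrow> real) \<Rightarrow> real \<Rightarrow> 'a set \<Rightarrow> 'a set" where
  "nbhd_in U d r F = {y \<in> U. \<exists>x\<in>F. d x y < r}"

text \<open>bicov_a((U,d1,d2,M),delta): minimal size of finite F in U with
  M(B^{d2}_delta(B^{d1}_delta(F))) > a (M restricted to U, unnormalised).\<close>
definition bicov :: "real \<Rightarrow> 'a set \<Rightarrow> ('a \<Rightarrow> 'a \<Rightarrow> real) \<Rightarrow> ('a \<Rightarrow> 'a \<Rightarrow> real) \<Rightarrow> 'a measure \<Rightarrow> real \<Rightarrow> enat" where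
  "bicov a U d1 d2 M \<delta> =
     Inf {enat (card F) | F. finite F \<and> F \<subseteq> U \<and>
            measure M (nbhd_in U d2 \<delta> (nbhd_in U d1 \<delta> F)) > a}"

definition BICOV :: "real \<Rightarrow> real \<Rightarrow> real \<Rightarrow> real \<Rightarrow> ('a \<Rightarrow> 'a \<Rightarrow> real) \<Rightarrow> ('a \<Rightarrow> 'a \<Rightarrow> real) \<Rightarrow> 'a measure \<Rightarrow> enat" where
  "BICOV \<alpha> \<kappa> \<kappa>' \<delta> d1 d2 M =
     (INF M' \<in> {M'. prob_space M' \<and>
                 (\<exists>f \<in> borel_measurable M. M' = density M f \<and> (AE x in M. f x \<le> ennreal \<alpha>))}.
        SUP U \<in> {U \<in> sets M'. measure M' U \<ge> \<kappa>}. bicov \<kappa>' U d1 d2 M' \<delta>)"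

end

theory Submission
  imports Defs
begin

(* Fix an admissible measure MX on X (density at most alpha1 w.r.t. mu).  Off a
   Borel set G of small mu-measure, the Borel factor map Phi transports
   Bowen-type closeness in X (scale delta1 N) to closeness in Y (scale delta N).
   Conditioning MX on G and pushing it forward by Phi gives an admissible
   measure MY on Y (density at most alpha1 / MX(G) <= alpha), and pulling a set
   U of MY-mass at least kappa back to G gives a set of MX-mass at least kappa1
   on which every bicovering of U's preimage maps to a bicovering of U.

   The good set G is built from a Lusin-type set K on which Phi is uniformly
   continuous (lusin_uniform, via closed inner regularity in compact metric
   spaces) together with a Markov bound on the number of times an orbit
   segment of length 2N leaves K (escapes_Markov); the resulting orbit
   estimate is factor_orbit_control. *)

definition admissible :: "real \<Rightarrow> 'a measure \<Rightarrow> 'a measure set" where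
  "admissible \<alpha> M = {M'. prob_space M' \<and>
     (\<exists>f \<in> borel_measurable M. M' = density M f \<and> (AE x in M. f x \<le> ennreal \<alpha>))}"

lemma BICOV_admissible:
  "BICOV \<alpha> \<kappa> \<kappa>' \<delta> d1 d2 M =
     (INF M' \<in> admissible \<alpha> M. SUP U \<in> {U \<in> sets M'. \<kappa> \<le> measure M' U}. bicov \<kappa>' U d1 d2 M' \<delta>)"
  by (simp add: BICOV_def admissible_def)

lemma admissible_measure_le:
  assumes M': "M' \<in> admissible \<alpha> M" and M: "finite_measure M" and \<alpha>: "0 \<le> \<alpha>"
  shows "sets M' = sets M" and "A \<in> sets M \<Longrightarrow> measure M' A \<le> \<alpha> * measure M A"
proof -
  obtain f where M'prob: "prob_space M'" and [measurable]: "f \<in> borel_measurable M"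
    and M'_def: "M' = density M f" and f_le: "AE x in M. f x \<le> ennreal \<alpha>"
    using M' by (auto simp: admissible_def)
  show "sets M' = sets M" by (simp add: M'_def)
  assume A: "A \<in> sets M"
  have "emeasure M' A = (\<integral>\<^sup>+x. f x * indicator A x \<partial>M)"
    using A by (simp add: M'_def emeasure_density)
  also have "\<dots> \<le> (\<integral>\<^sup>+x. ennreal \<alpha> * indicator A x \<partial>M)"
    using f_le by (intro nn_integral_mono_AE) (auto simp: indicator_def)
  also have "\<dots> = ennreal (\<alpha> * measure M A)"
    using A \<alpha> M by (simp add: nn_integral_cmult_indicator finite_measure.emeasure_eq_measure ennreal_mult)
  finally show "measure M' A \<le> \<alpha> * measure M A"
    using \<alpha> prob_space.finite_measure[OF M'prob]
    by (simp add: finite_measure.emeasure_eq_measure ennreal_le_iff)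
qed

lemma density_AE_bound:
  assumes fin: "finite_measure N" and g[measurable]: "g \<in> borel_measurable N" and a: "0 \<le> a"
    and le: "\<And>A. A \<in> sets N \<Longrightarrow> emeasure (density N g) A \<le> ennreal a * emeasure N A"
  shows "AE x in N. g x \<le> ennreal a"
proof (rule AE_upper_bound_inf_ennreal)
  fix e :: real assume e: "0 < e"
  define A where "A = {x \<in> space N. ennreal (a + e) \<le> g x}"
  have A[measurable]: "A \<in> sets N" unfolding A_def by measurable
  have "ennreal (a + e) * emeasure N A = (\<integral>\<^sup>+x. ennreal (a + e) * indicator A x \<partial>N)"
    by (simp add: nn_integral_cmult_indicator)
  also have "\<dots> \<le> (\<integral>\<^sup>+x. g x * indicator A x \<partial>N)"
    by (intro nn_integral_mono) (auto simp: A_def indicator_def)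
  also have "\<dots> \<le> ennreal a * emeasure N A"
    using le[OF A] by (simp add: emeasure_density)
  finally have "ennreal ((a + e) * measure N A) \<le> ennreal (a * measure N A)"
    using a e fin by (simp add: finite_measure.emeasure_eq_measure ennreal_mult del: ennreal_plus)
  then have "(a + e) * measure N A \<le> a * measure N A"
    using a by (subst (asm) ennreal_le_iff) auto
  then have "measure N A = 0"
    using e measure_nonneg[of N A] by (simp add: algebra_simps mult_le_0_iff)
  then have "A \<in> null_sets N"
    using fin by (simp add: null_sets_def finite_measure.emeasure_eq_measure)
  moreover have "{x \<in> space N. \<not> g x \<le> ennreal a + ennreal e} \<subseteq> A"
    using a e by (auto simp: A_def)
  ultimately show "AE x in N. g x \<le> ennreal a + ennreal e" by (rule AE_I')
qed

(* Conversely, domination by alpha * M makes a probability measure admissible,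
   with the Radon-Nikodym derivative as density. *)
lemma admissibleI:
  assumes M: "prob_space M" and M': "prob_space M'" and sets: "sets M' = sets M" and \<alpha>: "0 \<le> \<alpha>"
    and le: "\<And>A. A \<in> sets M \<Longrightarrow> measure M' A \<le> \<alpha> * measure M A"
  shows "M' \<in> admissible \<alpha> M"
proof -
  interpret M: prob_space M by fact
  interpret M': prob_space M' by fact
  have "absolutely_continuous M M'"
    unfolding absolutely_continuous_def
  proof
    fix B assume B: "B \<in> null_sets M"
    then have "measure M' B \<le> 0"
      using le[of B] by (simp add: null_sets_def M.emeasure_eq_measure)
    then show "B \<in> null_sets M'"
      using B sets by (simp add: null_sets_def M'.emeasure_eq_measure measure_le_0_iff)
  qed
  then have dens: "density M (RN_deriv M M') = M'"
    using sets by (intro M.density_RN_deriv) auto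
  have "AE x in M. RN_deriv M M' x \<le> ennreal \<alpha>"
  proof (rule density_AE_bound)
    fix A assume "A \<in> sets M"
    then show "emeasure (density M (RN_deriv M M')) A \<le> ennreal \<alpha> * emeasure M A"
      using le[of A] \<alpha> unfolding dens
      by (simp add: M'.emeasure_eq_measure M.emeasure_eq_measure ennreal_mult[symmetric])
  qed (use \<alpha> M.finite_measure_axioms in auto)
  then show ?thesis
    using M' dens by (auto simp: admissible_def intro!: bexI[of _ "RN_deriv M M'"])
qed

definition conditioned_image :: "'a measure \<Rightarrow> 'a set \<Rightarrow> ('a \<Rightarrow> 'b) \<Rightarrow> 'b measure \<Rightarrow> 'b measure" where
  "conditioned_image M G f N = distr (density M (\<lambda>x. ennreal (indicator G x / measure M G))) N f"

lemma conditioned_image_measure: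
  assumes M: "prob_space M" and f: "f \<in> measurable M N" and G: "G \<in> sets M" and c: "0 < measure M G"
  shows "prob_space (conditioned_image M G f N)" and "sets (conditioned_image M G f N) = sets N"
    and "A \<in> sets N \<Longrightarrow> measure (conditioned_image M G f N) A = measure M (f -` A \<inter> G) / measure M G"
proof -
  interpret M: prob_space M by fact
  define c where "c = measure M G"
  have cpos: "0 < c" using c by (simp add: c_def)
  have G_meas[measurable]: "G \<in> sets M" by fact
  have emeasure: "emeasure (conditioned_image M G f N) A = ennreal (measure M (f -` A \<inter> G) / c)"
    if A: "A \<in> sets N" for A
  proof -
    have fA: "f -` A \<inter> space M \<in> sets M" using measurable_sets[OF f A] .
    have "f -` A \<inter> G = (f -` A \<inter> space M) \<inter> G" using sets.sets_into_space[OF G] by auto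
    then have fAG: "f -` A \<inter> G \<in> sets M" using fA G by simp
    have "emeasure (conditioned_image M G f N) A
        = (\<integral>\<^sup>+x. ennreal (indicator G x / c) * indicator (f -` A \<inter> space M) x \<partial>M)"
      using A f fA unfolding conditioned_image_def c_def by (simp add: emeasure_distr emeasure_density)
    also have "\<dots> = (\<integral>\<^sup>+x. ennreal (1 / c) * indicator (f -` A \<inter> G) x \<partial>M)"
      by (intro nn_integral_cong) (auto simp: indicator_def)
    also have "\<dots> = ennreal (measure M (f -` A \<inter> G) / c)"
      using fAG cpos by (simp add: nn_integral_cmult_indicator M.emeasure_eq_measure ennreal_mult[symmetric])
    finally show ?thesis .
  qed
  show "sets (conditioned_image M G f N) = sets N" by (simp add: conditioned_image_def)
  have "f -` space N \<inter> G = G" using sets.sets_into_space[OF G] measurable_space[OF f] by auto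
  then show "prob_space (conditioned_image M G f N)"
    using emeasure[of "space N"] cpos by (intro prob_spaceI) (simp add: conditioned_image_def c_def)
  show "measure (conditioned_image M G f N) A = measure M (f -` A \<inter> G) / measure M G" if "A \<in> sets N"
    using emeasure[OF that] cpos by (simp add: measure_def c_def)
qed

lemma conditioned_image_admissible:
  assumes mu: "prob_space mu" and nu: "prob_space nu"
    and Phi: "Phi \<in> measurable mu nu" "distr mu nu Phi = nu"
    and MX: "MX \<in> admissible \<alpha>\<^sub>1 mu" and \<alpha>\<^sub>1: "0 \<le> \<alpha>\<^sub>1"
    and G: "G \<in> sets mu" and c: "0 < measure MX G" "\<alpha>\<^sub>1 \<le> measure MX G * \<alpha>"
  shows "conditioned_image MX G Phi nu \<in> admissible \<alpha> nu"
proof -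
  interpret mu: prob_space mu by fact
  interpret MX: prob_space MX using MX by (simp add: admissible_def)
  have sets_MX: "sets MX = sets mu"
    using admissible_measure_le(1)[OF MX mu.finite_measure_axioms \<alpha>\<^sub>1] .
  have Phi_MX: "Phi \<in> measurable MX nu" by (subst measurable_cong_sets[OF sets_MX refl]) (rule Phi(1))
  note MY = conditioned_image_measure[OF MX.prob_space_axioms Phi_MX _ c(1)]
  show ?thesis
  proof (rule admissibleI[OF nu MY(1,2)])
    show "G \<in> sets MX" "G \<in> sets MX" using G sets_MX by simp_all
    have "0 \<le> measure MX G * \<alpha>" using c \<alpha>\<^sub>1 by simp
    then show "0 \<le> \<alpha>" using c(1) by (simp add: zero_le_mult_iff)
    fix A assume A: "A \<in> sets nu"
    have PhiA: "Phi -` A \<inter> space mu \<in> sets mu" using measurable_sets[OF Phi(1) A] .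
    have "measure MX (Phi -` A \<inter> G) \<le> measure MX (Phi -` A \<inter> space mu)"
      using PhiA sets_MX sets.sets_into_space[OF G] by (intro MX.finite_measure_mono) auto
    also have "\<dots> \<le> \<alpha>\<^sub>1 * measure mu (Phi -` A \<inter> space mu)"
      using admissible_measure_le(2)[OF MX mu.finite_measure_axioms \<alpha>\<^sub>1 PhiA] .
    also have "\<dots> = \<alpha>\<^sub>1 * measure nu A"
      using measure_distr[OF Phi(1) A] Phi(2) A by simp
    finally have "measure (conditioned_image MX G Phi nu) A \<le> (\<alpha>\<^sub>1 / measure MX G) * measure nu A"
      using MY(3)[OF _ A] G sets_MX c(1) by (simp add: divide_right_mono)
    also have "\<dots> \<le> \<alpha> * measure nu A"
      using c by (intro mult_right_mono) (auto simp: divide_le_eq mult.commute)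
    finally show "measure (conditioned_image MX G Phi nu) A \<le> \<alpha> * measure nu A" .
  qed
qed

lemma admissible_measure_ge:
  assumes MX: "MX \<in> admissible \<alpha>\<^sub>1 mu" and mu: "prob_space mu" and \<alpha>\<^sub>1: "0 \<le> \<alpha>\<^sub>1"
    and G: "G \<in> sets mu" and small: "measure mu (space mu - G) \<le> \<eta>"
  shows "1 - \<alpha>\<^sub>1 * \<eta> \<le> measure MX G"
proof -
  interpret mu: prob_space mu by fact
  interpret MX: prob_space MX using MX by (simp add: admissible_def)
  note MX_le = admissible_measure_le[OF MX mu.finite_measure_axioms \<alpha>\<^sub>1]
  have space: "space MX = space mu" using sets_eq_imp_space_eq[OF MX_le(1)] .
  have "measure MX (space mu - G) \<le> \<alpha>\<^sub>1 * \<eta>"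
    using MX_le(2)[of "space mu - G"] G mult_left_mono[OF small \<alpha>\<^sub>1] by auto
  moreover have "measure MX G = 1 - measure MX (space mu - G)"
    using MX.prob_compl[of G] G MX_le(1) space by simp
  ultimately show ?thesis by simp
qed

lemma nbhd_in_borel:
  assumes "U \<in> sets borel" and "\<And>y. continuous_on UNIV (e y)"
  shows "nbhd_in U e r W \<in> sets borel"
proof -
  have "nbhd_in U e r W = U \<inter> (\<Union>x\<in>W. {y. e x y < r})" by (auto simp: nbhd_in_def)
  moreover have "open (\<Union>x\<in>W. {y. e x y < r})"
    using assms(2) by (intro open_UN ballI open_Collect_less) (auto intro: continuous_intros)
  ultimately show ?thesis using assms(1) by auto
qed

lemma bicov_pullback:
  assumes MX: "finite_measure MX" and Phi: "Phi \<in> measurable MX MY" and G: "G \<in> sets MX"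
    and c: "0 < c" "c \<le> 1"
    and MY: "\<And>A. A \<in> sets MY \<Longrightarrow> measure MY A = measure MX (Phi -` A \<inter> G) / c"
    and nbhd: "\<And>W. nbhd_in UY e2 s W \<in> sets MY"
    and good1: "\<And>x x'. x \<in> G \<Longrightarrow> x' \<in> G \<Longrightarrow> d1 x x' < r \<Longrightarrow> e1 (Phi x) (Phi x') < s"
    and good2: "\<And>x x'. x \<in> G \<Longrightarrow> x' \<in> G \<Longrightarrow> d2 x x' < r \<Longrightarrow> e2 (Phi x) (Phi x') < s"
  shows "bicov \<kappa>' UY e1 e2 MY s \<le> bicov \<kappa>' (Phi -` UY \<inter> G) d1 d2 MX r"
  unfolding bicov_def
proof (rule Inf_greatest)
  interpret MX: finite_measure MX by fact
  define UX where "UX = Phi -` UY \<inter> G"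
  fix n assume "n \<in> {enat (card F) |F. finite F \<and> F \<subseteq> Phi -` UY \<inter> G \<and>
      \<kappa>' < measure MX (nbhd_in (Phi -` UY \<inter> G) d2 r (nbhd_in (Phi -` UY \<inter> G) d1 r F))}"
  then obtain F where n: "n = enat (card F)" and F: "finite F" "F \<subseteq> UX"
    and F_big: "\<kappa>' < measure MX (nbhd_in UX d2 r (nbhd_in UX d1 r F))"
    by (auto simp: UX_def)
  define W where "W = nbhd_in UY e2 s (nbhd_in UY e1 s (Phi ` F))"
  have WY: "W \<in> sets MY" unfolding W_def by (rule nbhd)
  have PhiW: "Phi -` W \<inter> G \<in> sets MX"
  proof -
    have "Phi -` W \<inter> G = (Phi -` W \<inter> space MX) \<inter> G" using sets.sets_into_space[OF G] by auto
    then show ?thesis using measurable_sets[OF Phi WY] G by simp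
  qed
  have "nbhd_in UX d2 r (nbhd_in UX d1 r F) \<subseteq> Phi -` W \<inter> G"
  proof
    fix z assume "z \<in> nbhd_in UX d2 r (nbhd_in UX d1 r F)"
    then obtain y x where z: "z \<in> UX" and y: "y \<in> UX" and x: "x \<in> F"
      and "d1 x y < r" and "d2 y z < r" by (auto simp: nbhd_in_def)
    moreover have "x \<in> UX" using x F by auto
    ultimately have "e1 (Phi x) (Phi y) < s" and "e2 (Phi y) (Phi z) < s"
      using good1 good2 by (auto simp: UX_def)
    then show "z \<in> Phi -` W \<inter> G" using x y z by (auto simp: W_def nbhd_in_def UX_def)
  qed
  then have "measure MX (nbhd_in UX d2 r (nbhd_in UX d1 r F)) \<le> measure MX (Phi -` W \<inter> G)"
    using PhiW by (intro MX.finite_measure_mono)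
  also have "\<dots> \<le> measure MX (Phi -` W \<inter> G) / c"
    using c by (simp add: le_divide_eq mult_left_le)
  also have "\<dots> = measure MY W" using MY[OF WY] by simp
  finally have "enat (card (Phi ` F)) \<in> {enat (card F) |F. finite F \<and> F \<subseteq> UY \<and>
      \<kappa>' < measure MY (nbhd_in UY e2 s (nbhd_in UY e1 s F))}"
    using F F_big by (auto simp: W_def UX_def)
  then show "Inf {enat (card F) |F. finite F \<and> F \<subseteq> UY \<and>
      \<kappa>' < measure MY (nbhd_in UY e2 s (nbhd_in UY e1 s F))} \<le> n"
    by (rule Inf_lower2) (simp add: n card_image_le F)
qed

lemma BICOV_factor_compare:
  fixes mu :: "'a::metric_space measure" and nu :: "'b::metric_space measure"
  assumes mu: "prob_space mu" "sets mu = sets borel" and nu: "prob_space nu" "sets nu = sets borel"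
    and Phi: "Phi \<in> measurable mu nu" "distr mu nu Phi = nu"
    and G: "G \<in> sets borel" "measure mu (- G) \<le> \<eta>"
    and par: "1 \<le> \<alpha>\<^sub>1" "0 < \<alpha>" "\<alpha>\<^sub>1 \<le> (1 - \<alpha>\<^sub>1 * \<eta>) * \<alpha>" "0 \<le> \<kappa>" "\<kappa>\<^sub>1 \<le> (1 - \<alpha>\<^sub>1 * \<eta>) * \<kappa>"
    and good1: "\<And>x x'. x \<in> G \<Longrightarrow> x' \<in> G \<Longrightarrow> d1 x x' < r \<Longrightarrow> e1 (Phi x) (Phi x') < s"
    and good2: "\<And>x x'. x \<in> G \<Longrightarrow> x' \<in> G \<Longrightarrow> d2 x x' < r \<Longrightarrow> e2 (Phi x) (Phi x') < s"
    and cont: "\<And>y. continuous_on UNIV (e1 y)" "\<And>y. continuous_on UNIV (e2 y)"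
  shows "BICOV \<alpha> \<kappa> \<kappa>' s e1 e2 nu \<le> BICOV \<alpha>\<^sub>1 \<kappa>\<^sub>1 \<kappa>' r d1 d2 mu"
  unfolding BICOV_admissible
proof (rule INF_greatest)
  fix MX assume MX: "MX \<in> admissible \<alpha>\<^sub>1 mu"
  interpret MX: prob_space MX using MX by (simp add: admissible_def)
  have \<alpha>\<^sub>1: "0 \<le> \<alpha>\<^sub>1" using par(1) by simp
  have sets_MX: "sets MX = sets borel"
    using admissible_measure_le(1)[OF MX prob_space.finite_measure[OF mu(1)] \<alpha>\<^sub>1] mu(2) by simp
  define c where "c = measure MX G"
  have "- G = space mu - G" using sets_eq_imp_space_eq[OF mu(2)] by auto
  then have c_ge: "1 - \<alpha>\<^sub>1 * \<eta> \<le> c"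
    using admissible_measure_ge[OF MX mu(1) \<alpha>\<^sub>1] G mu(2) by (simp add: c_def)
  have c\<alpha>: "\<alpha>\<^sub>1 \<le> c * \<alpha>" using par(3) mult_right_mono[OF c_ge, of \<alpha>] par(2) by linarith
  then have "0 < c * \<alpha>" using par(1) by linarith
  then have cpos: "0 < c" using par(2) by (simp add: zero_less_mult_iff)
  define MY where "MY = conditioned_image MX G Phi nu"
  have MY: "MY \<in> admissible \<alpha> nu"
    unfolding MY_def using conditioned_image_admissible[OF mu(1) nu(1) Phi MX \<alpha>\<^sub>1] G mu(2) cpos c\<alpha>
    by (simp add: c_def)
  have Phi_MX: "Phi \<in> measurable MX nu"
    using Phi(1) sets_MX mu(2) by (metis measurable_cong_sets)
  have G_MX: "G \<in> sets MX" using G sets_MX by simp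
  note MY_meas = conditioned_image_measure[OF MX.prob_space_axioms Phi_MX G_MX cpos[unfolded c_def],
      folded MY_def c_def]
  have sets_MY: "sets MY = sets borel" using MY_meas(2) nu(2) by simp
  have Phi_MY: "Phi \<in> measurable MX MY" by (subst measurable_cong_sets[OF refl MY_meas(2)]) (rule Phi_MX)
  show "(INF M' \<in> admissible \<alpha> nu. SUP U \<in> {U \<in> sets M'. \<kappa> \<le> measure M' U}. bicov \<kappa>' U e1 e2 M' s)
      \<le> (SUP U \<in> {U \<in> sets MX. \<kappa>\<^sub>1 \<le> measure MX U}. bicov \<kappa>' U d1 d2 MX r)"
  proof (rule INF_lower2[OF MY], rule SUP_least)
    fix UY assume "UY \<in> {U \<in> sets MY. \<kappa> \<le> measure MY U}"
    then have UY: "UY \<in> sets borel" "\<kappa> \<le> measure MY UY" using sets_MY by auto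
    have "bicov \<kappa>' UY e1 e2 MY s \<le> bicov \<kappa>' (Phi -` UY \<inter> G) d1 d2 MX r"
    proof (rule bicov_pullback[where G = G and c = c])
      show "finite_measure MX" "Phi \<in> measurable MX MY" "G \<in> sets MX" "0 < c" "c \<le> 1"
        using MX.finite_measure_axioms Phi_MY G_MX cpos by (simp_all add: c_def)
      show "measure MY A = measure MX (Phi -` A \<inter> G) / c" if "A \<in> sets MY" for A
        using MY_meas(3) that MY_meas(2) by simp
      show "nbhd_in UY e2 s W \<in> sets MY" for W
        using nbhd_in_borel[OF UY(1) cont(2)] sets_MY by simp
    qed (auto simp: good1 good2)
    also have "\<dots> \<le> (SUP U \<in> {U \<in> sets MX. \<kappa>\<^sub>1 \<le> measure MX U}. bicov \<kappa>' U d1 d2 MX r)"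
    proof (rule SUP_upper, safe)
      have "Phi -` UY \<inter> G = (Phi -` UY \<inter> space MX) \<inter> G" using sets.sets_into_space[OF G_MX] by auto
      then show "Phi -` UY \<inter> G \<in> sets MX"
        using measurable_sets[OF Phi_MY] UY(1) sets_MY G_MX by simp
      have "\<kappa>\<^sub>1 \<le> c * \<kappa>" using par(5) mult_right_mono[OF c_ge par(4)] by simp
      also have "\<dots> \<le> c * measure MY UY" using UY(2) cpos by simp
      also have "\<dots> = measure MX (Phi -` UY \<inter> G)" using MY_meas(3)[of UY] UY(1) nu(2) cpos by simp
      finally show "\<kappa>\<^sub>1 \<le> measure MX (Phi -` UY \<inter> G)" .
    qed
    finally show "bicov \<kappa>' UY e1 e2 MY s
        \<le> (SUP U \<in> {U \<in> sets MX. \<kappa>\<^sub>1 \<le> measure MX U}. bicov \<kappa>' U d1 d2 MX r)" .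
  qed
qed

lemma compact_dense_sequence:
  assumes "compact (UNIV :: 'a::metric_space set)"
  obtains d :: "nat \<Rightarrow> 'a::metric_space" where "\<And>x e. 0 < e \<Longrightarrow> \<exists>n. dist x (d n) < e"
proof -
  have "\<forall>e>0. \<exists>k. finite k \<and> k \<subseteq> (UNIV :: 'a set) \<and> UNIV \<subseteq> (\<Union>x\<in>k. ball x e)"
    using seq_compact_imp_totally_bounded[OF compact_imp_seq_compact[OF assms]] .
  then have "\<forall>m::nat. \<exists>k. finite k \<and> UNIV \<subseteq> (\<Union>x\<in>k. ball (x::'a) (1 / Suc m))"
    by simp
  then obtain F where "\<And>m::nat. finite (F m) \<and> UNIV \<subseteq> (\<Union>x\<in>F m. ball (x::'a) (1 / Suc m))"
    by metis
  then have F: "\<And>m. finite (F m)" "\<And>m. UNIV \<subseteq> (\<Union>x\<in>F m. ball x (1 / Suc m))"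
    by auto
  define D where "D = (\<Union>m. F m)"
  have "countable D" unfolding D_def using F(1) by (auto intro: countable_finite)
  moreover have "D \<noteq> {}" using F(2)[of 0] unfolding D_def by blast
  ultimately have range_D: "range (from_nat_into D) = D" by simp
  show ?thesis
  proof (rule that)
    fix x :: 'a and e :: real assume e: "0 < e"
    obtain m where m: "1 / real (Suc m) < e"
      using reals_Archimedean[OF e] by (auto simp: inverse_eq_divide)
    have "x \<in> (\<Union>x\<in>F m. ball x (1 / Suc m))" using F(2)[of m] by blast
    then obtain y where y: "y \<in> F m" "dist y x < 1 / Suc m" by auto
    then have "y \<in> range (from_nat_into D)" using range_D unfolding D_def by blast
    then obtain n where "y = from_nat_into D n" by blast
    with y show "\<exists>n. dist x (from_nat_into D n) < e" using m by (metis dist_commute order.strict_trans)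
  qed
qed

(* A compact metric space embeds continuously and injectively into the Polish
   space of real sequences, via distances to a dense sequence. *)
lemma compact_metric_embedding:
  assumes "compact (UNIV :: 'a::metric_space set)"
  obtains emb :: "'a::metric_space \<Rightarrow> nat \<Rightarrow> real" where "continuous_on UNIV emb" "inj emb"
proof -
  obtain d :: "nat \<Rightarrow> 'a" where dense: "\<And>x e. 0 < e \<Longrightarrow> \<exists>n. dist x (d n) < e"
    using compact_dense_sequence[OF assms] by blast
  define emb :: "'a \<Rightarrow> nat \<Rightarrow> real" where "emb x = (\<lambda>n. dist x (d n))" for x
  have "continuous_on UNIV emb" unfolding emb_def
    by (intro continuous_on_coordinatewise_then_product continuous_intros)
  moreover have "inj emb"
  proof (rule injI)
    fix x y assume "emb x = emb y"
    then have same: "\<And>n. dist x (d n) = dist y (d n)" unfolding emb_def by metis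
    show "x = y"
    proof (rule ccontr)
      assume "x \<noteq> y"
      then obtain n where "dist x (d n) < dist x y / 2" using dense[of "dist x y / 2" x] by auto
      then show False using dist_triangle2[of x y "d n"] same[of n] by linarith
    qed
  qed
  ultimately show ?thesis by (rule that)
qed

lemma borel_image_compact_injective:
  fixes f :: "'a::topological_space \<Rightarrow> 'b::t2_space"
  assumes cpt: "compact (UNIV :: 'a set)" and cont: "continuous_on UNIV f" and inj: "inj f"
    and A: "A \<in> sets borel"
  shows "f ` A \<in> sets borel"
proof -
  have closed_range: "closed (range f)"
    using compact_continuous_image[OF cont cpt] by (simp add: compact_imp_closed)
  have cont_inv: "continuous_on (range f) (inv f)"
    using continuous_on_inv[OF cont cpt] inj by simp
  have "f ` A = inv f -` A \<inter> range f" using inj by auto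
  moreover have "inv f -` A \<inter> space (restrict_space borel (range f)) \<in> sets (restrict_space borel (range f))"
    using measurable_sets[OF borel_measurable_continuous_on_restrict[OF cont_inv] A] .
  ultimately show ?thesis using closed_range by (simp add: sets_restrict_space_iff)
qed

(* Finite Borel measures on compact metric spaces are inner regular with respect
   to closed sets; transported from the Polish case along the embedding. *)
lemma closed_inner_regular:
  fixes M :: "'a::metric_space measure"
  assumes cpt: "compact (UNIV :: 'a set)" and sets: "sets M = sets borel" and fin: "finite_measure M"
    and A: "A \<in> sets borel" and e: "0 < e"
  obtains C where "closed C" "C \<subseteq> A" "measure M (A - C) < e"
proof -
  interpret finite_measure M by fact
  have spM: "space M = UNIV" using sets_eq_imp_space_eq[OF sets] by simp
  obtain emb :: "'a \<Rightarrow> nat \<Rightarrow> real" where cont: "continuous_on UNIV emb" and inj: "inj emb"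
    using compact_metric_embedding[OF cpt] by blast
  have emb_meas: "emb \<in> measurable M borel"
    using borel_measurable_continuous_onI[OF cont] measurable_cong_sets[OF sets refl] by blast
  have image_borel: "emb ` A \<in> sets borel" by (rule borel_image_compact_injective[OF cpt cont inj A])
  define N where "N = distr M borel emb"
  have N_emb: "emeasure N K = emeasure M (emb -` K)" if "K \<in> sets borel" for K
    using that emb_meas by (simp add: N_def emeasure_distr spM)
  have reg: "emeasure N (emb ` A) = (SUP K \<in> {K. K \<subseteq> emb ` A \<and> compact K}. emeasure N K)"
    using N_emb[of UNIV] image_borel by (intro inner_regular) (auto simp: N_def emeasure_eq_measure)
  show ?thesis
  proof (cases "measure M A < e")
    case True then show ?thesis by (intro that[of "{}"]) auto
  next
    case False
    have "ennreal (measure M A - e) < ennreal (measure M A)" using e False by (simp add: ennreal_less_iff)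
    also have "\<dots> = emeasure N (emb ` A)"
      using N_emb[OF image_borel] inj by (simp add: emeasure_eq_measure inj_vimage_image_eq)
    finally obtain K where K: "K \<subseteq> emb ` A" "compact K" "ennreal (measure M A - e) < emeasure N K"
      unfolding reg by (auto simp: less_SUP_iff)
    define C where "C = emb -` K"
    have closedC: "closed C" unfolding C_def using K(2) cont by (intro closed_vimage compact_imp_closed)
    have CA: "C \<subseteq> A" unfolding C_def using K(1) inj by (auto dest: injD)
    have "ennreal (measure M A - e) < ennreal (measure M C)"
      using K(3) N_emb[of K] K(2) by (simp add: C_def emeasure_eq_measure compact_imp_closed)
    then have "measure M A - e < measure M C" using False by (subst (asm) ennreal_less_iff) auto
    moreover have "measure M (A - C) = measure M A - measure M C"
      using A closedC CA sets by (simp add: finite_measure_Diff)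
    ultimately show ?thesis using closedC CA by (intro that[of C]) auto
  qed
qed

lemma compact_closed_separated:
  fixes S T :: "'a::metric_space set"
  assumes "compact S" "closed T" "S \<inter> T = {}"
  shows "\<exists>\<delta>>0. \<forall>x\<in>S. \<forall>y\<in>T. \<delta> \<le> dist x y"
proof (cases "S = {} \<or> T = {}")
  case True then show ?thesis by (intro exI[of _ 1]) auto
next
  case False
  then have S: "S \<noteq> {}" and T: "T \<noteq> {}" by auto
  have "continuous_on S (\<lambda>x. infdist x T)" by (intro continuous_intros)
  then obtain x0 where x0: "x0 \<in> S" "\<And>y. y \<in> S \<Longrightarrow> infdist x0 T \<le> infdist y T"
    using continuous_attains_inf[OF assms(1) S] by blast
  have "x0 \<notin> T" using x0(1) assms(3) by blast
  then have "0 < infdist x0 T"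
    using in_closed_iff_infdist_zero[OF assms(2) T, of x0] infdist_nonneg[of x0 T] by linarith
  moreover have "infdist x0 T \<le> dist x y" if "x \<in> S" "y \<in> T" for x y
    using x0(2)[OF that(1)] infdist_le[OF that(2), of x] by linarith
  ultimately show ?thesis by blast
qed

lemma closed_family_separated:
  fixes C :: "nat \<Rightarrow> 'a::metric_space set"
  assumes cpt: "compact (UNIV :: 'a set)" and closed: "\<And>j. closed (C j)"
    and disj: "\<And>i j. i \<noteq> j \<Longrightarrow> C i \<inter> C j = {}"
  shows "\<exists>\<rho>>0. \<forall>i<m. \<forall>j<m. i \<noteq> j \<longrightarrow> (\<forall>x\<in>C i. \<forall>y\<in>C j. \<rho> \<le> dist x y)"
proof -
  have "\<exists>\<delta>>0. \<forall>x\<in>C j. \<forall>y\<in>(\<Union>i\<in>{i. i < m \<and> i \<noteq> j}. C i). \<delta> \<le> dist x y" for j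
  proof (rule compact_closed_separated)
    show "compact (C j)" using closed_Int_compact[OF closed[of j] cpt] by simp
    show "closed (\<Union>i\<in>{i. i < m \<and> i \<noteq> j}. C i)" using closed by (intro closed_UN) auto
    show "C j \<inter> (\<Union>i\<in>{i. i < m \<and> i \<noteq> j}. C i) = {}" using disj by blast
  qed
  then obtain \<delta> where \<delta>: "\<And>j. 0 < \<delta> j" "\<And>i j x y. i < m \<Longrightarrow> i \<noteq> j \<Longrightarrow> x \<in> C j \<Longrightarrow> y \<in> C i \<Longrightarrow> \<delta> j \<le> dist x y"
    by (metis (mono_tags, lifting) UN_I mem_Collect_eq)
  define \<rho> where "\<rho> = Min (insert 1 (\<delta> ` {..<m}))"
  have "0 < \<rho>" unfolding \<rho>_def using \<delta>(1) by (subst Min_gr_iff) auto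
  moreover have "\<rho> \<le> dist x y" if "i < m" "j < m" "i \<noteq> j" "x \<in> C i" "y \<in> C j" for i j x y
  proof -
    from that have "\<rho> \<le> \<delta> i" "\<delta> i \<le> dist x y" unfolding \<rho>_def using \<delta>(2)[of j i x y] by auto
    then show "\<rho> \<le> dist x y" by linarith
  qed
  ultimately show ?thesis by blast
qed

lemma compact_borel_partition:
  assumes cpt: "compact (UNIV :: 'b::metric_space set)" and e: "0 < \<epsilon>"
  obtains m :: nat and P :: "nat \<Rightarrow> 'b::metric_space set"
  where "\<And>j. P j \<in> sets borel" "\<And>i j. i \<noteq> j \<Longrightarrow> P i \<inter> P j = {}" "\<And>y. \<exists>j<m. y \<in> P j"
    "\<And>j a b. a \<in> P j \<Longrightarrow> b \<in> P j \<Longrightarrow> dist a b < \<epsilon>"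
proof -
  have "\<forall>e>0. \<exists>k. finite k \<and> k \<subseteq> (UNIV :: 'b set) \<and> UNIV \<subseteq> (\<Union>x\<in>k. ball x e)"
    using seq_compact_imp_totally_bounded[OF compact_imp_seq_compact[OF cpt]] .
  then obtain k :: "'b set" where k: "finite k" "UNIV \<subseteq> (\<Union>x\<in>k. ball x (\<epsilon> / 2))"
    using e by (meson half_gt_zero)
  obtain xs where xs: "set xs = k" using finite_list[OF k(1)] by blast
  define m where "m = length xs"
  define B where "B j = (if j < m then ball (xs ! j) (\<epsilon> / 2) else {})" for j
  define P where "P j = B j - (\<Union>i<j. B i)" for j
  show ?thesis
  proof (rule that[of P m])
    show "P j \<in> sets borel" for j by (auto simp: P_def B_def)
    show "P i \<inter> P j = {}" if "i \<noteq> j" for i j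
      using that by (cases "i < j") (auto simp: P_def)
    fix y
    have "y \<in> (\<Union>x\<in>k. ball x (\<epsilon> / 2))" using k(2) by blast
    then obtain j0 where j0: "j0 < m" "y \<in> B j0"
      using xs by (auto simp: in_set_conv_nth B_def m_def)
    define j where "j = (LEAST j. y \<in> B j)"
    have "y \<in> B j" "j \<le> j0" "\<forall>i<j. y \<notin> B i"
      unfolding j_def using j0(2) by (auto intro: LeastI Least_le dest: not_less_Least)
    then show "\<exists>j<m. y \<in> P j" using j0(1) by (auto simp: P_def intro!: exI[of _ j])
  next
    fix j a b assume "a \<in> P j" "b \<in> P j"
    then have "dist (xs ! j) a < \<epsilon> / 2" "dist (xs ! j) b < \<epsilon> / 2"
      by (auto simp: P_def B_def split: if_splits)
    then show "dist a b < \<epsilon>" using dist_triangle3[of a b "xs ! j"] by linarith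
  qed
qed

lemma lusin_uniform:
  fixes mu :: "'a::metric_space measure" and Phi :: "'a \<Rightarrow> 'b::metric_space"
  assumes cX: "compact (UNIV :: 'a set)" and cY: "compact (UNIV :: 'b set)"
    and sets: "sets mu = sets borel" and fin: "finite_measure mu"
    and Phi: "Phi \<in> borel_measurable borel" and e: "0 < \<epsilon>" and \<eta>: "0 < \<eta>"
  obtains K \<rho> where "closed K" "0 < \<rho>" "measure mu (- K) < \<eta>"
    "\<And>a b. a \<in> K \<Longrightarrow> b \<in> K \<Longrightarrow> dist a b < \<rho> \<Longrightarrow> dist (Phi a) (Phi b) < \<epsilon>"
proof -
  interpret finite_measure mu by fact
  obtain P :: "nat \<Rightarrow> 'b set" and m :: nat where P_borel: "\<And>j. P j \<in> sets borel"
    and P_disj: "\<And>i j. i \<noteq> j \<Longrightarrow> P i \<inter> P j = {}" and P_cover: "\<And>y. \<exists>j<m. y \<in> P j"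
    and P_small: "\<And>j a b. a \<in> P j \<Longrightarrow> b \<in> P j \<Longrightarrow> dist a b < \<epsilon>"
    by (rule compact_borel_partition[OF cY e]) (rule that, assumption+)
  have m: "0 < m" using P_cover[of undefined] by auto
  define A where "A j = Phi -` P j" for j
  have A_borel: "A j \<in> sets borel" for j unfolding A_def using measurable_sets[OF Phi P_borel] by simp
  have "\<forall>j. \<exists>C. closed C \<and> C \<subseteq> A j \<and> measure mu (A j - C) < \<eta> / m"
    using closed_inner_regular[OF cX sets fin A_borel, of "\<eta> / m"] \<eta> m by (metis divide_pos_pos of_nat_0_less_iff)
  then obtain C where "\<forall>j. closed (C j) \<and> C j \<subseteq> A j \<and> measure mu (A j - C j) < \<eta> / m"
    by (metis choice)
  then have C_closed: "\<And>j. closed (C j)" and CA: "\<And>j. C j \<subseteq> A j"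
    and C_meas: "\<And>j. measure mu (A j - C j) < \<eta> / m"
    by auto
  have C_disj: "C i \<inter> C j = {}" if "i \<noteq> j" for i j
    using CA[of i] CA[of j] P_disj[OF that] by (auto simp: A_def)
  obtain \<rho> where \<rho>: "0 < \<rho>"
    and sep: "\<And>i j x y. i < m \<Longrightarrow> j < m \<Longrightarrow> i \<noteq> j \<Longrightarrow> x \<in> C i \<Longrightarrow> y \<in> C j \<Longrightarrow> \<rho> \<le> dist x y"
    using closed_family_separated[where C = C and m = m, OF cX C_closed C_disj] by blast
  define K where "K = (\<Union>j<m. C j)"
  have "- K \<subseteq> (\<Union>j<m. A j - C j)"
  proof
    fix x assume "x \<in> - K"
    obtain j where "j < m" "Phi x \<in> P j" using P_cover by blast
    with \<open>x \<in> - K\<close> show "x \<in> (\<Union>j<m. A j - C j)" by (auto simp: K_def A_def)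
  qed
  then have "measure mu (- K) \<le> measure mu (\<Union>j<m. A j - C j)"
    using A_borel C_closed sets by (intro finite_measure_mono) auto
  also have "\<dots> \<le> (\<Sum>j<m. measure mu (A j - C j))"
    using A_borel C_closed sets by (intro finite_measure_subadditive_finite) auto
  also have "\<dots> < (\<Sum>j<m. \<eta> / m)" using C_meas m by (intro sum_strict_mono) auto
  also have "\<dots> = \<eta>" using m by simp
  finally have K_meas: "measure mu (- K) < \<eta>" .
  show ?thesis
  proof (rule that[OF _ \<rho> K_meas])
    show "closed K" unfolding K_def using C_closed by auto
    fix a b assume "a \<in> K" "b \<in> K" "dist a b < \<rho>"
    then obtain i j where "i < m" "j < m" "a \<in> C i" "b \<in> C j" by (auto simp: K_def)
    moreover from this have "i = j" using sep[of i j a b] \<open>dist a b < \<rho>\<close> by linarith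
    ultimately have "Phi a \<in> P i" "Phi b \<in> P i" using CA by (auto simp: A_def)
    then show "dist (Phi a) (Phi b) < \<epsilon>" by (rule P_small)
  qed
qed

lemma cmpp_systemD:
  fixes mu :: "'a::metric_space measure"
  assumes "cmpp_system mu T Tinv"
  shows "compact (UNIV :: 'a set)" and "continuous_on UNIV T" and "continuous_on UNIV Tinv"
    and "\<And>x. Tinv (T x) = x" and "\<And>x. T (Tinv x) = x" and "sets mu = sets borel" and "prob_space mu" and "distr mu mu T = mu"
  using assms by (auto simp: cmpp_system_def homeomorphism_def)

lemma continuous_on_funpow:
  fixes f :: "'a::topological_space \<Rightarrow> 'a"
  assumes "continuous_on UNIV f"
  shows "continuous_on UNIV (f ^^ k)"
proof (induction k)
  case 0
  then show ?case by (simp add: id_def continuous_on_id)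
next
  case (Suc k)
  then show ?case
    using continuous_on_compose[OF Suc continuous_on_subset[OF assms]] by (simp add: comp_def)
qed

lemma distr_funpow:
  assumes R: "R \<in> measurable M M" and inv: "distr M M R = M"
  shows "distr M M (R ^^ k) = M"
proof (induction k)
  case (Suc k)
  have "distr M M (R \<circ> R ^^ k) = distr (distr M M (R ^^ k)) M R"
    using distr_distr[OF R measurable_compose_n[OF R]] by simp
  then show ?case using Suc inv by (simp add: comp_def)
qed (simp add: id_def)

lemma distr_left_inverse:
  assumes R: "R \<in> measurable M M" and Ri: "Ri \<in> measurable M M" and inv: "distr M M R = M"
    and left_inv: "\<And>x. Ri (R x) = x"
  shows "distr M M Ri = M"
proof -
  have "distr M M Ri = distr M M (Ri \<circ> R)" using distr_distr[OF Ri R] inv by simp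
  also have "Ri \<circ> R = (\<lambda>x. x)" using left_inv by (auto simp: fun_eq_iff)
  finally show ?thesis by simp
qed

lemma AE_intertwining_funpow:
  assumes R: "R \<in> measurable M M" and inv: "distr M M R = M"
    and eq: "AE x in M. Phi (R x) = R' (Phi x)"
  shows "AE x in M. Phi ((R ^^ k) x) = (R' ^^ k) (Phi x)"
proof (induction k)
  case (Suc k)
  have "AE x in distr M M (R ^^ k). Phi (R x) = R' (Phi x)"
    unfolding distr_funpow[OF R inv] by (rule eq)
  then have "AE x in M. Phi (R ((R ^^ k) x)) = R' (Phi ((R ^^ k) x))"
    by (rule AE_distrD[OF measurable_compose_n[OF R]])
  with Suc show ?case by eventually_elim simp
qed simp

lemma iter_int_continuous:
  assumes "cmpp_system mu T Tinv"
  shows "continuous_on UNIV (iter_int T Tinv n)"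
  using cmpp_systemD(2,3)[OF assms] by (simp add: iter_int_def continuous_on_funpow)

lemma iter_int_measure_preserving:
  assumes X: "cmpp_system mu T Tinv"
  shows "iter_int T Tinv n \<in> measurable mu mu" and "distr mu mu (iter_int T Tinv n) = mu"
proof -
  note X' = cmpp_systemD[OF X]
  have T: "T \<in> measurable mu mu" and Tinv: "Tinv \<in> measurable mu mu"
    using X'(2,3,6) borel_measurable_continuous_onI measurable_cong_sets by metis+
  have "distr mu mu Tinv = mu" by (rule distr_left_inverse[OF T Tinv X'(8,4)])
  then show "iter_int T Tinv n \<in> measurable mu mu" and "distr mu mu (iter_int T Tinv n) = mu"
    using T Tinv X'(8) by (simp_all add: iter_int_def distr_funpow measurable_compose_n)
qed

lemma AE_intertwining_iter_int:
  assumes X: "cmpp_system mu T Tinv" and Y: "cmpp_system nu S Sinv"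
    and eq: "AE x in mu. Phi (T x) = S (Phi x)"
  shows "AE x in mu. \<forall>n::int. Phi (iter_int T Tinv n x) = iter_int S Sinv n (Phi x)"
proof -
  have T: "T \<in> measurable mu mu" "distr mu mu T = mu"
    using iter_int_measure_preserving[OF X, of 1] by (simp_all add: iter_int_def)
  have Tinv: "Tinv \<in> measurable mu mu" "distr mu mu Tinv = mu"
    using iter_int_measure_preserving[OF X, of "-1"] by (simp_all add: iter_int_def)
  have "AE x in distr mu mu Tinv. Phi (T x) = S (Phi x)" unfolding Tinv(2) by (rule eq)
  then have "AE x in mu. Phi (T (Tinv x)) = S (Phi (Tinv x))" by (rule AE_distrD[OF Tinv(1)])
  then have eq_inv: "AE x in mu. Phi (Tinv x) = Sinv (Phi x)"
  proof eventually_elim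
    case (elim x)
    then have "Sinv (Phi x) = Sinv (S (Phi (Tinv x)))" using cmpp_systemD(5)[OF X] by simp
    then show ?case using cmpp_systemD(4)[OF Y] by simp
  qed
  have "AE x in mu. Phi (iter_int T Tinv n x) = iter_int S Sinv n (Phi x)" for n
    using AE_intertwining_funpow[OF T eq, of "nat n"] AE_intertwining_funpow[OF Tinv eq_inv, of "nat (- n)"]
    by (cases "0 \<le> n") (simp_all add: iter_int_def)
  then show ?thesis by (simp add: AE_all_countable)
qed

lemma dyn_dist_continuous:
  assumes "cmpp_system mu T Tinv"
  shows "continuous_on UNIV (dyn_dist T Tinv I x)"
  unfolding dyn_dist_def[abs_def] using iter_int_continuous[OF assms]
  by (intro continuous_intros) auto

definition escapes :: "('a \<Rightarrow> 'a) \<Rightarrow> ('a \<Rightarrow> 'a) \<Rightarrow> 'a set \<Rightarrow> int set \<Rightarrow> 'a \<Rightarrow> real" where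
  "escapes T Tinv K I x = (\<Sum>n\<in>I. indicator (- K) (iter_int T Tinv n x))"

lemma escapes_mono:
  assumes "I \<subseteq> J" "finite J"
  shows "escapes T Tinv K I x \<le> escapes T Tinv K J x"
  unfolding escapes_def using assms by (intro sum_mono2) auto

lemma dist_bound_off_good_set:
  fixes Phi :: "'a::metric_space \<Rightarrow> 'b::metric_space"
  assumes good: "\<And>a b. a \<in> K \<Longrightarrow> b \<in> K \<Longrightarrow> dist a b < \<rho> \<Longrightarrow> dist (Phi a) (Phi b) < \<epsilon>"
    and D: "\<And>u v. dist (u::'b) v \<le> D" and \<rho>: "0 < \<rho>" and \<epsilon>: "0 \<le> \<epsilon>"
  shows "dist (Phi a) (Phi b) \<le> \<epsilon> + D * indicator (- K) a + D * indicator (- K) b + D / \<rho> * dist a b"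
proof -
  have D0: "0 \<le> D" using D[of "Phi a" "Phi a"] by simp
  have far: "D \<le> D / \<rho> * dist a b" if "\<rho> \<le> dist a b"
    using mult_left_mono[OF that, of "D / \<rho>"] D0 \<rho> by simp
  have "0 \<le> D / \<rho> * dist a b" "0 \<le> D * indicator (- K) a" "0 \<le> D * indicator (- K) b"
    using D0 \<rho> by auto
  then show ?thesis
    using good[of a b] D[of "Phi a" "Phi b"] far \<epsilon>
    by (cases "a \<in> K \<and> b \<in> K \<and> dist a b < \<rho>") (auto simp: indicator_def not_less)
qed

lemma dyn_dist_factor_bound:
  fixes Phi :: "'a::metric_space \<Rightarrow> 'b::metric_space" and \<epsilon> D \<rho> :: real
  assumes pw: "\<And>a b. dist (Phi a) (Phi b) \<le> \<epsilon> + D * indicator (- K) a + D * indicator (- K) b + D / \<rho> * dist a b"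
    and eq: "\<And>n. n \<in> I \<Longrightarrow> Phi (iter_int T Tinv n x) = iter_int S Sinv n (Phi x)"
    and eq': "\<And>n. n \<in> I \<Longrightarrow> Phi (iter_int T Tinv n x') = iter_int S Sinv n (Phi x')"
  shows "dyn_dist S Sinv I (Phi x) (Phi x')
     \<le> real (card I) * \<epsilon> + D * escapes T Tinv K I x + D * escapes T Tinv K I x' + D / \<rho> * dyn_dist T Tinv I x x'"
proof -
  have "dyn_dist S Sinv I (Phi x) (Phi x')
      = (\<Sum>n\<in>I. dist (Phi (iter_int T Tinv n x)) (Phi (iter_int T Tinv n x')))"
    unfolding dyn_dist_def using eq eq' by (intro sum.cong) auto
  also have "\<dots> \<le> (\<Sum>n\<in>I. \<epsilon> + D * indicator (- K) (iter_int T Tinv n x)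
      + D * indicator (- K) (iter_int T Tinv n x') + D / \<rho> * dist (iter_int T Tinv n x) (iter_int T Tinv n x'))"
    by (intro sum_mono pw)
  also have "\<dots> = real (card I) * \<epsilon> + D * escapes T Tinv K I x + D * escapes T Tinv K I x'
      + D / \<rho> * dyn_dist T Tinv I x x'"
    by (simp add: sum.distrib sum_distrib_left dyn_dist_def escapes_def)
  finally show ?thesis .
qed

(* By invariance the expected number of escapes in [-N, N) is 2N mu(-K), so
   Markov's inequality bounds the set of orbits escaping often. *)
lemma escapes_Markov:
  fixes mu :: "'a::metric_space measure"
  assumes X: "cmpp_system mu T Tinv" and K: "K \<in> sets borel" and N: "0 < N" and \<theta>: "0 < \<theta>"
  shows "measure mu {x. \<theta> * N \<le> escapes T Tinv K {- int N..<int N} x} \<le> 2 * measure mu (- K) / \<theta>"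
proof -
  interpret prob_space mu using cmpp_systemD(7)[OF X] .
  have sets: "sets mu = sets borel" using cmpp_systemD(6)[OF X] .
  have sp: "space mu = UNIV" using sets_eq_imp_space_eq[OF sets] by simp
  define A where "A n = iter_int T Tinv n -` (- K)" for n
  have A: "A n \<in> sets mu" "measure mu (A n) = measure mu (- K)" for n
    using measurable_sets[OF iter_int_measure_preserving(1)[OF X], of "- K" n]
      measure_distr[OF iter_int_measure_preserving(1)[OF X], of "- K" n]
      iter_int_measure_preserving(2)[OF X, of n] K sets sp
    by (simp_all add: A_def)
  have esc: "escapes T Tinv K {- int N..<int N} x = (\<Sum>n\<in>{- int N..<int N}. indicator (A n) x)" for x
    unfolding escapes_def by (intro sum.cong) (auto simp: indicator_def A_def)
  have int: "integrable mu (escapes T Tinv K {- int N..<int N})"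
    unfolding esc by (intro Bochner_Integration.integrable_sum)
      (simp add: A(1) emeasure_eq_measure)
  have "(\<integral>x. escapes T Tinv K {- int N..<int N} x \<partial>mu) = (\<Sum>n\<in>{- int N..<int N}. measure mu (A n))"
    unfolding esc using A(1) by (subst Bochner_Integration.integral_sum) (auto simp: emeasure_eq_measure)
  also have "\<dots> = 2 * N * measure mu (- K)" using A(2) by simp
  finally have mean: "(\<integral>x. escapes T Tinv K {- int N..<int N} x \<partial>mu) = 2 * N * measure mu (- K)" .
  have "measure mu {x \<in> space mu. \<theta> * N \<le> escapes T Tinv K {- int N..<int N} x}
      \<le> (\<integral>x. escapes T Tinv K {- int N..<int N} x \<partial>mu) / (\<theta> * N)"
    using \<theta> N by (intro integral_Markov_inequality_measure[OF int, of UNIV])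
      (auto simp: sp sets escapes_def intro!: sum_nonneg)
  also have "\<dots> = 2 * measure mu (- K) / \<theta>" using mean N \<theta> by simp
  finally show ?thesis using sp by simp
qed

lemma escapes_borel:
  assumes X: "cmpp_system mu T Tinv" and K: "K \<in> sets borel"
  shows "escapes T Tinv K I \<in> borel_measurable borel"
  unfolding escapes_def[abs_def]
  using borel_measurable_continuous_onI[OF iter_int_continuous[OF X]] K
  by (intro borel_measurable_sum measurable_compose[OF _ borel_measurable_indicator]) auto

lemma good_orbit_set:
  fixes mu :: "'a::metric_space measure"
  assumes X: "cmpp_system mu T Tinv"
    and eq: "AE x in mu. \<forall>n. Phi (iter_int T Tinv n x) = iter_int S Sinv n (Phi x)"
    and K: "K \<in> sets borel" "measure mu (- K) \<le> \<eta> * \<theta> / 2" and \<theta>: "0 < \<theta>" and N: "0 < N"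
  obtains G where "G \<in> sets borel" "measure mu (- G) \<le> \<eta>"
    "\<And>x n. x \<in> G \<Longrightarrow> Phi (iter_int T Tinv n x) = iter_int S Sinv n (Phi x)"
    "\<And>x. x \<in> G \<Longrightarrow> escapes T Tinv K {- int N..<int N} x < \<theta> * N"
proof -
  interpret prob_space mu using cmpp_systemD(7)[OF X] .
  have sets: "sets mu = sets borel" using cmpp_systemD(6)[OF X] .
  obtain Z where Z: "{x \<in> space mu. \<not> (\<forall>n. Phi (iter_int T Tinv n x) = iter_int S Sinv n (Phi x))} \<subseteq> Z"
    "emeasure mu Z = 0" "Z \<in> sets mu"
    using eq by (rule AE_E)
  define esc where "esc = escapes T Tinv K {- int N..<int N}"
  define G where "G = - Z \<inter> {x. esc x < \<theta> * N}"
  have esc_borel: "esc \<in> borel_measurable borel" unfolding esc_def by (rule escapes_borel[OF X K(1)])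
  have large: "{x. \<theta> * N \<le> esc x} \<in> sets borel"
    using measurable_sets[OF esc_borel atLeast_borel[of "\<theta> * N"]] by (simp add: vimage_def)
  have "- G = Z \<union> {x. \<theta> * N \<le> esc x}" unfolding G_def by auto
  then have "measure mu (- G) \<le> measure mu Z + measure mu {x. \<theta> * N \<le> esc x}"
    using Z(3) large sets by (simp add: measure_Un_le)
  also have "\<dots> \<le> 2 * measure mu (- K) / \<theta>"
    using Z(2) escapes_Markov[OF X K(1) N \<theta>] by (simp add: emeasure_eq_measure esc_def)
  also have "\<dots> \<le> \<eta>" using K(2) \<theta> by (simp add: divide_le_eq)
  finally have "measure mu (- G) \<le> \<eta>" .
  moreover have "esc x < \<theta> * N" if "x \<in> G" for x using that by (simp add: G_def)
  moreover have "G \<in> sets borel"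
  proof -
    have "{x. esc x < \<theta> * N} = - {x. \<theta> * N \<le> esc x}" by auto
    then show ?thesis using Z(3) sets large unfolding G_def by auto
  qed
  moreover have "Phi (iter_int T Tinv n x) = iter_int S Sinv n (Phi x)" if "x \<in> G" for x n
    using that Z(1) sets_eq_imp_space_eq[OF sets] unfolding G_def by auto
  ultimately show ?thesis using that unfolding esc_def by blast
qed

lemma compact_dist_bound:
  assumes "compact (UNIV :: 'b::metric_space set)"
  obtains D where "0 < D" "\<And>u v :: 'b. dist u v \<le> D"
proof -
  have "bounded (UNIV :: 'b set)" using assms by (rule compact_imp_bounded)
  then have bound: "dist u v \<le> diameter (UNIV :: 'b set)" for u v :: 'b
    by (rule diameter_bounded_bound) auto
  show ?thesis
  proof (rule that)
    show "0 < diameter (UNIV :: 'b set) + 1" using bound[of undefined undefined] by simp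
    show "dist u v \<le> diameter (UNIV :: 'b set) + 1" for u v :: 'b using bound[of u v] by simp
  qed
qed

lemma orbit_distance_transfer:
  fixes Phi :: "'a::metric_space \<Rightarrow> 'b::metric_space" and D \<rho> \<theta> \<delta> \<delta>\<^sub>1 :: real and N :: nat
  assumes pw: "\<And>a b. dist (Phi a) (Phi b) \<le> \<delta> / 3 + D * indicator (- K) a + D * indicator (- K) b + D / \<rho> * dist a b"
    and eq: "\<And>n. Phi (iter_int T Tinv n x) = iter_int S Sinv n (Phi x)"
    and eq': "\<And>n. Phi (iter_int T Tinv n x') = iter_int S Sinv n (Phi x')"
    and esc: "escapes T Tinv K {- int N..<int N} x < \<theta> * N"
    and esc': "escapes T Tinv K {- int N..<int N} x' < \<theta> * N"
    and I: "I \<subseteq> {- int N..<int N}" "card I = N"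
    and D: "0 < D" and \<rho>: "0 < \<rho>" and \<theta>: "2 * D * \<theta> = \<delta> / 3" and \<delta>\<^sub>1: "D / \<rho> * \<delta>\<^sub>1 \<le> \<delta> / 3"
    and close: "dyn_dist T Tinv I x x' < \<delta>\<^sub>1 * N"
  shows "dyn_dist S Sinv I (Phi x) (Phi x') < \<delta> * N"
proof -
  have "D * escapes T Tinv K I y < D * (\<theta> * N)" if "escapes T Tinv K {- int N..<int N} y < \<theta> * N" for y
    using escapes_mono[OF I(1) finite_atLeastLessThan_int, of T Tinv K y] that D
    by (intro mult_strict_left_mono) auto
  from this[OF esc] this[OF esc']
  have "D * escapes T Tinv K I x + D * escapes T Tinv K I x' < (2 * D * \<theta>) * N"
    by (simp add: algebra_simps)
  then have escape_part: "D * escapes T Tinv K I x + D * escapes T Tinv K I x' < \<delta> / 3 * N"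
    by (simp only: \<theta>)
  have "D / \<rho> * dyn_dist T Tinv I x x' \<le> D / \<rho> * (\<delta>\<^sub>1 * N)"
    using close D \<rho> by (intro mult_left_mono) auto
  also have "\<dots> \<le> \<delta> / 3 * N"
    using mult_right_mono[OF \<delta>\<^sub>1, of N] by (simp add: mult.assoc)
  finally have distance_part: "D / \<rho> * dyn_dist T Tinv I x x' \<le> \<delta> / 3 * N" .
  have "dyn_dist S Sinv I (Phi x) (Phi x')
      \<le> real (card I) * (\<delta> / 3) + D * escapes T Tinv K I x + D * escapes T Tinv K I x'
        + D / \<rho> * dyn_dist T Tinv I x x'"
    using eq eq' by (intro dyn_dist_factor_bound[OF pw])
  moreover have "real (card I) * (\<delta> / 3) = \<delta> / 3 * N" "\<delta> * N = \<delta> / 3 * N + \<delta> / 3 * N + \<delta> / 3 * N"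
    using I(2) by simp_all
  ultimately show ?thesis using escape_part distance_part by linarith
qed

definition transfers_closeness ::
  "('a::metric_space \<Rightarrow> 'a) \<Rightarrow> ('a \<Rightarrow> 'a) \<Rightarrow> ('b::metric_space \<Rightarrow> 'b) \<Rightarrow> ('b \<Rightarrow> 'b) \<Rightarrow> ('a \<Rightarrow> 'b)
     \<Rightarrow> nat \<Rightarrow> real \<Rightarrow> real \<Rightarrow> 'a set \<Rightarrow> bool" where
  "transfers_closeness T Tinv S Sinv Phi N \<delta>\<^sub>1 \<delta> G \<longleftrightarrow>
     (\<forall>x\<in>G. \<forall>x'\<in>G. \<forall>I \<subseteq> {- int N..<int N}. card I = N \<longrightarrow>
        dyn_dist T Tinv I x x' < \<delta>\<^sub>1 * real N \<longrightarrow> dyn_dist S Sinv I (Phi x) (Phi x') < \<delta> * real N)"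

lemma factor_orbit_control:
  fixes mu :: "'a::metric_space measure" and nu :: "'b::metric_space measure" and \<eta> \<delta> :: real
  assumes X: "cmpp_system mu T Tinv" and Y: "cmpp_system nu S Sinv"
    and Phi: "borel_factor_map mu T nu S Phi" and \<eta>: "0 < \<eta>" and \<delta>: "0 < \<delta>"
  obtains \<delta>\<^sub>1 :: real where "0 < \<delta>\<^sub>1" "\<delta>\<^sub>1 < \<delta>"
    "\<And>N. 0 < N \<Longrightarrow> \<exists>G \<in> sets borel. measure mu (- G) \<le> \<eta> \<and>
       transfers_closeness T Tinv S Sinv Phi N \<delta>\<^sub>1 \<delta> G"
proof -
  interpret mu: prob_space mu using cmpp_systemD(7)[OF X] .
  have Phi_borel: "Phi \<in> borel_measurable borel"
    using Phi cmpp_systemD(6)[OF X] cmpp_systemD(6)[OF Y]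
    by (metis borel_factor_map_def measurable_cong_sets)
  obtain D where D: "0 < D" "\<And>u v :: 'b. dist u v \<le> D"
    using compact_dist_bound[OF cmpp_systemD(1)[OF Y]] by blast
  define \<theta> where "\<theta> = \<delta> / (6 * D)"
  have \<theta>: "0 < \<theta>" "2 * D * \<theta> = \<delta> / 3" using \<delta> D by (simp_all add: \<theta>_def)
  obtain K \<rho> where K: "closed K" "0 < \<rho>" "measure mu (- K) < \<eta> * \<theta> / 2"
    and K_good: "\<And>a b. a \<in> K \<Longrightarrow> b \<in> K \<Longrightarrow> dist a b < \<rho> \<Longrightarrow> dist (Phi a) (Phi b) < \<delta> / 3"
    using lusin_uniform[OF cmpp_systemD(1)[OF X] cmpp_systemD(1)[OF Y] cmpp_systemD(6)[OF X]
        mu.finite_measure_axioms Phi_borel, of "\<delta> / 3" "\<eta> * \<theta> / 2"] \<delta> \<eta> \<theta>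
    by auto
  have pw: "dist (Phi a) (Phi b) \<le> \<delta> / 3 + D * indicator (- K) a + D * indicator (- K) b + D / \<rho> * dist a b"
    for a b using dist_bound_off_good_set[OF K_good D(2) K(2)] \<delta> by simp
  have eq: "AE x in mu. \<forall>n. Phi (iter_int T Tinv n x) = iter_int S Sinv n (Phi x)"
    using AE_intertwining_iter_int[OF X Y] Phi by (simp add: borel_factor_map_def)
  define \<delta>\<^sub>1 where "\<delta>\<^sub>1 = min (\<delta> / 2) (\<rho> * \<delta> / (3 * D))"
  have \<delta>\<^sub>1: "0 < \<delta>\<^sub>1" "\<delta>\<^sub>1 < \<delta>" using \<delta> D(1) K(2) by (simp_all add: \<delta>\<^sub>1_def)
  have "D / \<rho> * \<delta>\<^sub>1 \<le> D / \<rho> * (\<rho> * \<delta> / (3 * D))"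
    using D(1) K(2) by (intro mult_left_mono) (simp_all add: \<delta>\<^sub>1_def)
  then have \<delta>\<^sub>1_small: "D / \<rho> * \<delta>\<^sub>1 \<le> \<delta> / 3" using D(1) K(2) by simp
  show ?thesis
  proof (rule that[OF \<delta>\<^sub>1(1,2)])
    fix N :: nat assume N: "0 < N"
    obtain G where G: "G \<in> sets borel" "measure mu (- G) \<le> \<eta>"
      and G_eq: "\<And>x n. x \<in> G \<Longrightarrow> Phi (iter_int T Tinv n x) = iter_int S Sinv n (Phi x)"
      and G_esc: "\<And>x. x \<in> G \<Longrightarrow> escapes T Tinv K {- int N..<int N} x < \<theta> * N"
      using good_orbit_set[OF X eq _ _ \<theta>(1) N, of K \<eta>] K by auto
    have "dyn_dist S Sinv I (Phi x) (Phi x') < \<delta> * N"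
      if "x \<in> G" "x' \<in> G" "I \<subseteq> {- int N..<int N}" "card I = N" "dyn_dist T Tinv I x x' < \<delta>\<^sub>1 * N"
      for x x' I
      using orbit_distance_transfer[OF pw G_eq G_eq G_esc G_esc, OF that(1,2,1,2,3,4) D(1) K(2) \<theta>(2)
          \<delta>\<^sub>1_small that(5)] .
    then show "\<exists>G \<in> sets borel. measure mu (- G) \<le> \<eta> \<and> transfers_closeness T Tinv S Sinv Phi N \<delta>\<^sub>1 \<delta> G"
      using G by (auto simp: transfers_closeness_def)
  qed
qed

lemma slack_parameter:
  fixes \<alpha> \<alpha>\<^sub>1 \<kappa> \<kappa>' :: real
  assumes "1 \<le> \<alpha>\<^sub>1" "\<alpha>\<^sub>1 < \<alpha>" "0 < \<kappa>'" "\<kappa>' < \<kappa>"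
  obtains \<eta> where "0 < \<eta>" "\<alpha>\<^sub>1 \<le> (1 - \<alpha>\<^sub>1 * \<eta>) * \<alpha>"
    "\<kappa>' < (1 - \<alpha>\<^sub>1 * \<eta>) * \<kappa>" "(1 - \<alpha>\<^sub>1 * \<eta>) * \<kappa> < \<kappa>"
proof -
  have \<alpha>: "0 < \<alpha>" "\<alpha>\<^sub>1 / \<alpha> < 1" using assms by simp_all
  define r where "r = \<kappa>' / \<kappa>"
  have r: "r < 1" "\<kappa>' = r * \<kappa>" using assms by (simp_all add: r_def)
  define \<beta> where "\<beta> = max (\<alpha>\<^sub>1 / \<alpha>) ((r + 1) / 2)"
  have \<beta>: "\<beta> < 1" "\<alpha>\<^sub>1 \<le> \<beta> * \<alpha>" "\<kappa>' < \<beta> * \<kappa>"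
  proof -
    show "\<beta> < 1" using \<alpha>(2) r(1) by (simp add: \<beta>_def)
    have "\<alpha>\<^sub>1 / \<alpha> * \<alpha> \<le> \<beta> * \<alpha>" using \<alpha>(1) by (intro mult_right_mono) (auto simp: \<beta>_def)
    then show "\<alpha>\<^sub>1 \<le> \<beta> * \<alpha>" using \<alpha>(1) by simp
    have "r * \<kappa> < \<beta> * \<kappa>" using r(1) assms(3,4) by (intro mult_strict_right_mono) (auto simp: \<beta>_def less_max_iff_disj)
    then show "\<kappa>' < \<beta> * \<kappa>" using r(2) by simp
  qed
  show ?thesis
  proof (rule that[of "(1 - \<beta>) / \<alpha>\<^sub>1"])
    have "1 - \<alpha>\<^sub>1 * ((1 - \<beta>) / \<alpha>\<^sub>1) = \<beta>" using assms(1) by simp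
    then show "\<alpha>\<^sub>1 \<le> (1 - \<alpha>\<^sub>1 * ((1 - \<beta>) / \<alpha>\<^sub>1)) * \<alpha>" "\<kappa>' < (1 - \<alpha>\<^sub>1 * ((1 - \<beta>) / \<alpha>\<^sub>1)) * \<kappa>"
      "(1 - \<alpha>\<^sub>1 * ((1 - \<beta>) / \<alpha>\<^sub>1)) * \<kappa> < \<kappa>"
      using \<beta> assms by simp_all
    show "0 < (1 - \<beta>) / \<alpha>\<^sub>1" using \<beta>(1) assms(1) by simp
  qed
qed

lemma BICOV_window_compare:
  assumes X: "cmpp_system mu T Tinv" and Y: "cmpp_system nu S Sinv"
    and Phi: "borel_factor_map mu T nu S Phi"
    and G: "G \<in> sets borel" "measure mu (- G) \<le> \<eta>" "transfers_closeness T Tinv S Sinv Phi N \<delta>\<^sub>1 \<delta> G"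
    and par: "1 \<le> \<alpha>\<^sub>1" "0 < \<alpha>" "\<alpha>\<^sub>1 \<le> (1 - \<alpha>\<^sub>1 * \<eta>) * \<alpha>" "0 \<le> \<kappa>"
  shows "BICOV \<alpha> \<kappa> \<kappa>' (\<delta> * real N) (dyn_dist S Sinv {- int N..<0}) (dyn_dist S Sinv {0..<int N}) nu
      \<le> BICOV \<alpha>\<^sub>1 ((1 - \<alpha>\<^sub>1 * \<eta>) * \<kappa>) \<kappa>' (\<delta>\<^sub>1 * real N)
          (dyn_dist T Tinv {- int N..<0}) (dyn_dist T Tinv {0..<int N}) mu"
proof -
  note X' = cmpp_systemD[OF X] and Y' = cmpp_systemD[OF Y]
  have window: "{- int N..<0} \<subseteq> {- int N..<int N}" "card {- int N..<0} = N"
    "{0..<int N} \<subseteq> {- int N..<int N}" "card {0..<int N} = N" by auto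
  have Phi': "Phi \<in> measurable mu nu" "distr mu nu Phi = nu"
    using Phi by (simp_all add: borel_factor_map_def)
  show ?thesis
    by (rule BICOV_factor_compare[OF X'(7,6) Y'(7,6) Phi' G(1,2) par])
      (use G(3) window dyn_dist_continuous[OF Y] in \<open>auto simp: transfers_closeness_def\<close>)
qed

theorem mainTheorem3:
  fixes mu :: "'a::metric_space measure" and T Tinv :: "'a \<Rightarrow> 'a"
    and nu :: "'b::metric_space measure" and S Sinv :: "'b \<Rightarrow> 'b"
    and Phi :: "'a \<Rightarrow> 'b"
    and \<alpha> \<delta> \<kappa> \<kappa>' \<alpha>\<^sub>1 :: real
  assumes "cmpp_system mu T Tinv" and "cmpp_system nu S Sinv"
    and "borel_factor_map mu T nu S Phi"
    and "\<alpha> > 1" and "\<delta> > 0" and "\<kappa> > \<kappa>'" and "\<kappa>' > 0"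
    and "1 \<le> \<alpha>\<^sub>1" and "\<alpha>\<^sub>1 < \<alpha>"
  shows "\<exists>\<kappa>\<^sub>1 \<delta>\<^sub>1. \<kappa>' < \<kappa>\<^sub>1 \<and> \<kappa>\<^sub>1 < \<kappa> \<and> 0 < \<delta>\<^sub>1 \<and> \<delta>\<^sub>1 < \<delta> \<and>
     (\<forall>\<^sub>F N in sequentially.
        BICOV \<alpha>\<^sub>1 \<kappa>\<^sub>1 \<kappa>' (\<delta>\<^sub>1 * real N)
          (dyn_dist T Tinv {- int N..<0}) (dyn_dist T Tinv {0..<int N}) mu
        \<ge> BICOV \<alpha> \<kappa> \<kappa>' (\<delta> * real N)
          (dyn_dist S Sinv {- int N..<0}) (dyn_dist S Sinv {0..<int N}) nu)"
proof -
  obtain \<eta> where \<eta>: "0 < \<eta>" "\<alpha>\<^sub>1 \<le> (1 - \<alpha>\<^sub>1 * \<eta>) * \<alpha>"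
    "\<kappa>' < (1 - \<alpha>\<^sub>1 * \<eta>) * \<kappa>" "(1 - \<alpha>\<^sub>1 * \<eta>) * \<kappa> < \<kappa>"
    using slack_parameter[OF assms(8,9,7,6)] by blast
  obtain \<delta>\<^sub>1 where \<delta>\<^sub>1: "0 < \<delta>\<^sub>1" "\<delta>\<^sub>1 < \<delta>" and control: "\<And>N. 0 < N \<Longrightarrow>
      \<exists>G \<in> sets borel. measure mu (- G) \<le> \<eta> \<and> transfers_closeness T Tinv S Sinv Phi N \<delta>\<^sub>1 \<delta> G"
    using factor_orbit_control[OF assms(1-3) \<eta>(1) assms(5)] by blast
  have "BICOV \<alpha> \<kappa> \<kappa>' (\<delta> * real N) (dyn_dist S Sinv {- int N..<0}) (dyn_dist S Sinv {0..<int N}) nu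
      \<le> BICOV \<alpha>\<^sub>1 ((1 - \<alpha>\<^sub>1 * \<eta>) * \<kappa>) \<kappa>' (\<delta>\<^sub>1 * real N)
          (dyn_dist T Tinv {- int N..<0}) (dyn_dist T Tinv {0..<int N}) mu"
    if "1 \<le> N" for N
    using control[of N] that assms \<eta>(2) by (auto intro: BICOV_window_compare[OF assms(1-3)])
  then show ?thesis
    using \<eta>(3,4) \<delta>\<^sub>1 unfolding eventually_sequentially by blast
qed

end
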